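(* Let $\{\xi_j : j\in\mathbb{Z}\}$ be independent and identically distributed real random variables. Suppose $\xi_0$ has zero mean and finite positive variance, and that the moment generating function $t\mapsto \mathbb{E}[e^{t\xi_0}]$ of $\xi_0$ exists (is finite) on an open interval around zero. For $n\geq 1$ let $\mathcal{T}_n$ be the $n\times n$ random Toeplitz matrix whose $(i,j)$ entry is $\xi_{j-i}$ for $1\le i,j\le n$. Then there exist constants $C_0,C_1>0$ depending only on the distribution of $\xi_0$ such that \[ \mathbb{P}\left(\sigma_{\max}(\mathcal{T}_n)\geq C_0\left((2n)\log(2n)\right)^{1/2}\right)\leq \frac{C_1}{(2n)^2}. \]
   Context: $\sigma_{\max}(A)$ denotes the largest singular value of a matrix $A$, i.e. its operator norm $\max_{\|x\|_2=1}\|Ax\|_2$. *)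

theory Defs
  imports "HOL-Probability.Probability"
begin

definition sigma_max :: "nat \<Rightarrow> (nat \<Rightarrow> nat \<Rightarrow> real) \<Rightarrow> real" where
  "sigma_max n A =
     (SUP x\<in>{x :: nat \<Rightarrow> real. (\<Sum>j<n. (x j)\<^sup>2) = 1}.
        sqrt (\<Sum>i<n. (\<Sum>j<n. A i j * x j)\<^sup>2))"

text \<open>Random Toeplitz matrix: entry (i,j) is xi (j - i) (0-based indices,
  equivalent to the 1-based convention).\<close>
definition toeplitz :: "(int \<Rightarrow> 'a \<Rightarrow> real) \<Rightarrow> 'a \<Rightarrow> nat \<Rightarrow> nat \<Rightarrow> real" where
  "toeplitz \<xi> \<omega> i j = \<xi> (int j - int i) \<omega>"

end

(* For a unit vector x with X(theta) = sum_j x_j e^(i j theta), the product of the symbol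
   S(theta) = sum_(|l| < n) xi_l e^(i l theta) with the conjugate of X is the trigonometric polynomial
   of the correlation of xi and x, whose coefficients at 0, -1, ..., 1 - n are the entries of T_n x.
   The correlation lives on fewer than N = 3n points, so Parseval at the N-th roots of unity gives
   sigma_max(T_n) <= max_(k<N) |S(2 pi k / N)|.

   At each of these frequencies Re S and Im S are sums of 2n - 1 independent copies of xi_0 with
   weights in [-1, 1]. Zero mean and a finite mgf near 0 give E exp(u xi_0) <= exp(K u^2) for |u| <= d,
   and the Chernoff bound with u = sqrt(log m / m), m = 2n, shows that each of them exceeds
   (K + 3) sqrt(m log m) with probability at most 2 m^(-3). A union bound over the 2N events gives
   6 / m^2 as soon as u <= d; the finitely many remaining n are absorbed into C1. *)

theory Submission
  imports Defs "HOL-Library.Real_Mod"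
begin

definition trig_poly :: "int set \<Rightarrow> (int \<Rightarrow> real) \<Rightarrow> real \<Rightarrow> complex" where
  "trig_poly F c \<theta> = (\<Sum>p\<in>F. of_real (c p) * cis (of_int p * \<theta>))"

lemma sum_cis_roots_of_unity:
  fixes p :: int
  assumes "0 < N" and "\<bar>p\<bar> < int N"
  shows "(\<Sum>k<N. cis (of_int p * (2 * pi * real k / real N))) = (if p = 0 then of_nat N else 0)"
proof (cases "p = 0")
  case False
  define r where "r = cis (2 * pi * of_int p / real N)"
  have power_r: "r ^ k = cis (of_int p * (2 * pi * real k / real N))" for k
    unfolding r_def Complex.DeMoivre by (rule arg_cong [where f = cis]) (simp add: field_simps)
  have "r \<noteq> 1"
  proof
    assume "r = 1"
    then obtain m :: int where "2 * pi * of_int p / real N = of_int m * (2 * pi)"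
      unfolding r_def cis_eq_1_iff by blast
    then have "real_of_int p = real_of_int (m * int N)"
      using assms(1) by (simp add: field_simps)
    then have p: "p = m * int N"
      by (simp only: of_int_eq_iff)
    with False have "1 * int N \<le> \<bar>m\<bar> * int N"
      by (intro mult_right_mono) auto
    with p assms(2) show False
      by (simp add: abs_mult)
  qed
  moreover have "r ^ N = 1"
  proof -
    have "r ^ N = cis (2 * pi * of_int p)"
      using power_r [of N] assms(1) by (simp add: mult_ac)
    also have "\<dots> = 1"
      by (rule cis_multiple_2pi) simp
    finally show ?thesis .
  qed
  ultimately have "(\<Sum>k<N. r ^ k) = 0"
    by (simp add: geometric_sum)
  with False show ?thesis
    by (simp only: power_r) simp
qed simp

lemma sum_trig_poly_roots_of_unity:
  assumes "0 < N" and "finite P" and "\<And>r. r \<in> P \<Longrightarrow> \<bar>r\<bar> < int N"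
  shows "(\<Sum>k<N. trig_poly P z (2 * pi * real k / real N))
           = of_nat N * of_real (if 0 \<in> P then z 0 else 0)"
proof -
  have "(\<Sum>k<N. trig_poly P z (2 * pi * real k / real N))
      = (\<Sum>r\<in>P. of_real (z r) * (\<Sum>k<N. cis (of_int r * (2 * pi * real k / real N))))"
    unfolding trig_poly_def sum_distrib_left by (rule sum.swap)
  also have "\<dots> = (\<Sum>r\<in>P. if r = 0 then of_real (z 0) * of_nat N else 0)"
    using assms by (intro sum.cong refl, subst sum_cis_roots_of_unity) auto
  finally show ?thesis
    using assms(2) by (simp add: mult.commute)
qed

lemma trig_poly_mult_cnj:
  assumes "finite F" and "finite G" and "finite P"
    and "\<And>p q. p \<in> F \<Longrightarrow> q \<in> G \<Longrightarrow> p - q \<in> P"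
  shows "trig_poly F a \<theta> * cnj (trig_poly G b \<theta>)
           = trig_poly P (\<lambda>r. \<Sum>p\<in>F. \<Sum>q\<in>G. if p - q = r then a p * b q else 0) \<theta>"
proof -
  have "trig_poly F a \<theta> * cnj (trig_poly G b \<theta>)
      = (\<Sum>p\<in>F. \<Sum>q\<in>G. of_real (a p * b q) * cis (of_int (p - q) * \<theta>))"
    unfolding trig_poly_def sum_product cnj_sum
    by (intro sum.cong refl) (simp add: cis_cnj cis_mult mult_ac right_diff_distrib)
  also have "\<dots> = (\<Sum>p\<in>F. \<Sum>q\<in>G. \<Sum>r\<in>P.
                    if p - q = r then of_real (a p * b q) * cis (of_int r * \<theta>) else 0)"
    using assms by (intro sum.cong refl) (simp add: sum.delta')
  also have "\<dots> = (\<Sum>p\<in>F. \<Sum>r\<in>P. \<Sum>q\<in>G.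
                    if p - q = r then of_real (a p * b q) * cis (of_int r * \<theta>) else 0)"
    by (intro sum.cong refl sum.swap)
  also have "\<dots> = (\<Sum>r\<in>P. \<Sum>p\<in>F. \<Sum>q\<in>G.
                    if p - q = r then of_real (a p * b q) * cis (of_int r * \<theta>) else 0)"
    by (rule sum.swap)
  also have "\<dots> = trig_poly P (\<lambda>r. \<Sum>p\<in>F. \<Sum>q\<in>G. if p - q = r then a p * b q else 0) \<theta>"
    unfolding trig_poly_def of_real_sum sum_distrib_right by (intro sum.cong refl) simp
  finally show ?thesis .
qed
lemma trig_poly_parseval:
  assumes "0 < N" and "finite F" and "\<And>p q. p \<in> F \<Longrightarrow> q \<in> F \<Longrightarrow> \<bar>p - q\<bar> < int N"
  shows "(\<Sum>k<N. (cmod (trig_poly F c (2 * pi * real k / real N)))\<^sup>2) = real N * (\<Sum>p\<in>F. (c p)\<^sup>2)"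
proof -
  define P where "P = {1 - int N..int N - 1}"
  define z where "z r = (\<Sum>p\<in>F. \<Sum>q\<in>F. if p - q = r then c p * c q else 0)" for r
  have "(cmod w)\<^sup>2 = Re (w * cnj w)" for w
    by (metis Re_complex_of_real complex_norm_square)
  also have "trig_poly F c \<theta> * cnj (trig_poly F c \<theta>) = trig_poly P z \<theta>" for \<theta>
    unfolding z_def using assms(2)
    by (intro trig_poly_mult_cnj) (auto simp: P_def abs_less_iff dest: assms(3))
  finally have "(cmod (trig_poly F c \<theta>))\<^sup>2 = Re (trig_poly P z \<theta>)" for \<theta> .
  then have "(\<Sum>k<N. (cmod (trig_poly F c (2 * pi * real k / real N)))\<^sup>2)
      = Re (\<Sum>k<N. trig_poly P z (2 * pi * real k / real N))"
    by simp
  also have "\<dots> = real N * z 0"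
    using assms(1) by (subst sum_trig_poly_roots_of_unity) (auto simp: P_def)
  also have "z 0 = (\<Sum>p\<in>F. (c p)\<^sup>2)"
    unfolding z_def using assms(2) by (simp add: power2_eq_square)
  finally show ?thesis .
qed

lemma Re_trig_poly: "Re (trig_poly F c \<theta>) = (\<Sum>p\<in>F. cos (of_int p * \<theta>) * c p)"
  by (simp add: trig_poly_def mult.commute)

lemma Im_trig_poly: "Im (trig_poly F c \<theta>) = (\<Sum>p\<in>F. sin (of_int p * \<theta>) * c p)"
  by (simp add: trig_poly_def mult.commute)

lemma sigma_max_le:
  assumes "1 \<le> n" and "0 \<le> B"
    and "\<And>x. (\<Sum>j<n. (x j)\<^sup>2) = 1 \<Longrightarrow> (\<Sum>i<n. (\<Sum>j<n. A i j * x j)\<^sup>2) \<le> B\<^sup>2"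
  shows "sigma_max n A \<le> B"
proof -
  have "(\<lambda>j::nat. if j = 0 then 1 else 0 :: real) \<in> {x. (\<Sum>j<n. (x j)\<^sup>2) = 1}"
    using assms(1) by (simp add: if_distrib [of "\<lambda>x. x\<^sup>2"] cong: if_cong)
  then have "{x :: nat \<Rightarrow> real. (\<Sum>j<n. (x j)\<^sup>2) = 1} \<noteq> {}"
    by (metis empty_iff)
  then show ?thesis
    unfolding sigma_max_def using assms(2,3) by (auto intro!: cSUP_least real_le_lsqrt)
qed

lemma toeplitz_apply_eq_correlation:
  fixes a :: "int \<Rightarrow> real" and x :: "nat \<Rightarrow> real"
  assumes "i < n"
  shows "(\<Sum>j<n. a (int j - int i) * x j)
           = (\<Sum>l\<in>{1 - int n..int n - 1}. \<Sum>q\<in>int ` {..<n}. if l - q = - int i then a l * x (nat q) else 0)"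
proof -
  have "(\<Sum>l\<in>{1 - int n..int n - 1}. \<Sum>q\<in>int ` {..<n}. if l - q = - int i then a l * x (nat q) else 0)
      = (\<Sum>q\<in>int ` {..<n}. \<Sum>l\<in>{1 - int n..int n - 1}. if l = q - int i then a l * x (nat q) else 0)"
    by (subst sum.swap) (simp add: algebra_simps)
  also have "\<dots> = (\<Sum>q\<in>int ` {..<n}. a (q - int i) * x (nat q))"
    using assms by (intro sum.cong refl) auto
  finally show ?thesis
    by (simp add: sum.reindex)
qed

lemma sigma_max_toeplitz_le:
  fixes a :: "int \<Rightarrow> real"
  assumes n: "1 \<le> n" and N: "3 * n - 2 \<le> N"
    and B: "\<And>k. k < N \<Longrightarrow> cmod (trig_poly {1 - int n..int n - 1} a (2 * pi * real k / real N)) \<le> B"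
  shows "sigma_max n (\<lambda>i j. a (int j - int i)) \<le> B"
proof (rule sigma_max_le [OF n])
  have "0 < N"
    using n N by linarith
  then show "0 \<le> B"
    using B [of 0] norm_ge_zero order_trans by blast
  fix x :: "nat \<Rightarrow> real"
  assume x: "(\<Sum>j<n. (x j)\<^sup>2) = 1"
  define L where "L = {1 - int n..int n - 1}"
  define J where "J = int ` {..<n}"
  define P where "P = {2 - 2 * int n..int n - 1}"
  define x' where "x' q = x (nat q)" for q
  define z where "z r = (\<Sum>l\<in>L. \<Sum>q\<in>J. if l - q = r then a l * x' q else 0)" for r
  define \<theta> where "\<theta> k = 2 * pi * real k / real N" for k
  have sum_J: "(\<Sum>q\<in>J. f q) = (\<Sum>j<n. f (int j))" for f :: "int \<Rightarrow> real"
    unfolding J_def by (simp add: sum.reindex)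
  have X: "(\<Sum>k<N. (cmod (trig_poly J x' (\<theta> k)))\<^sup>2) = real N"
    unfolding \<theta>_def using \<open>0 < N\<close> n N
    by (subst trig_poly_parseval) (auto simp: sum_J x'_def x, auto simp: J_def)
  have corr: "trig_poly L a t * cnj (trig_poly J x' t) = trig_poly P z t" for t
    unfolding z_def by (rule trig_poly_mult_cnj) (auto simp: L_def J_def P_def)
  have "real N * (\<Sum>r\<in>P. (z r)\<^sup>2) = (\<Sum>k<N. (cmod (trig_poly P z (\<theta> k)))\<^sup>2)"
    unfolding \<theta>_def using \<open>0 < N\<close> N by (intro trig_poly_parseval [symmetric]) (auto simp: P_def)
  also have "\<dots> = (\<Sum>k<N. (cmod (trig_poly L a (\<theta> k)) * cmod (trig_poly J x' (\<theta> k)))\<^sup>2)"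
    by (simp add: norm_mult flip: corr)
  also have "\<dots> \<le> (\<Sum>k<N. B\<^sup>2 * (cmod (trig_poly J x' (\<theta> k)))\<^sup>2)"
    unfolding power_mult_distrib
    by (intro sum_mono mult_right_mono power_mono) (auto simp: B \<theta>_def L_def)
  also have "\<dots> = B\<^sup>2 * real N"
    by (simp add: X flip: sum_distrib_left)
  finally have Z: "(\<Sum>r\<in>P. (z r)\<^sup>2) \<le> B\<^sup>2"
    using \<open>0 < N\<close> by (simp add: mult.commute)
  have row: "(\<Sum>j<n. a (int j - int i) * x j) = z (- int i)" if "i < n" for i
    unfolding z_def L_def J_def x'_def using that by (rule toeplitz_apply_eq_correlation)
  have "(\<Sum>i<n. (\<Sum>j<n. a (int j - int i) * x j)\<^sup>2) = (\<Sum>r\<in>(\<lambda>i. - int i) ` {..<n}. (z r)\<^sup>2)"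
    by (simp add: sum.reindex inj_on_def row)
  also have "\<dots> \<le> (\<Sum>r\<in>P. (z r)\<^sup>2)"
    by (intro sum_mono2) (auto simp: P_def)
  finally show "(\<Sum>i<n. (\<Sum>j<n. a (int j - int i) * x j)\<^sup>2) \<le> B\<^sup>2"
    using Z by linarith
qed

lemma sigma_max_toeplitz_ge_imp_cos_or_sin_sum_ge:
  fixes a :: "int \<Rightarrow> real"
  assumes n: "1 \<le> n" and N: "3 * n - 2 \<le> N"
    and large: "2 * t \<le> sigma_max n (\<lambda>i j. a (int j - int i))"
  shows "\<exists>k<N. t \<le> \<bar>\<Sum>l\<in>{1 - int n..int n - 1}. cos (of_int l * (2 * pi * real k / real N)) * a l\<bar>
             \<or> t \<le> \<bar>\<Sum>l\<in>{1 - int n..int n - 1}. sin (of_int l * (2 * pi * real k / real N)) * a l\<bar>"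
proof (rule ccontr)
  define S where "S k = trig_poly {1 - int n..int n - 1} a (2 * pi * real k / real N)" for k
  define B where "B = (MAX k\<in>{..<N}. \<bar>Re (S k)\<bar> + \<bar>Im (S k)\<bar>)"
  assume "\<not> ?thesis"
  then have small: "\<bar>Re (S k)\<bar> + \<bar>Im (S k)\<bar> < 2 * t" if "k < N" for k
    using that by (auto simp: S_def Re_trig_poly Im_trig_poly)
  have "0 < N"
    using n N by linarith
  then have "B < 2 * t"
    unfolding B_def using small by (subst Max_less_iff) auto
  moreover have "sigma_max n (\<lambda>i j. a (int j - int i)) \<le> B"
  proof (rule sigma_max_toeplitz_le [OF n N])
    fix k assume "k < N"
    then show "cmod (trig_poly {1 - int n..int n - 1} a (2 * pi * real k / real N)) \<le> B"
      unfolding B_def S_def [symmetric] by (intro order_trans [OF cmod_le] Max_ge) auto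
  qed
  ultimately show False
    using large by linarith
qed

lemma exp_le_second_order_taylor: "exp y \<le> 1 + y + y\<^sup>2 / 2 * exp \<bar>y\<bar>" for y :: real
proof -
  obtain t where t: "\<bar>t\<bar> \<le> \<bar>y\<bar>" "exp y = (\<Sum>m<2. y ^ m / fact m) + exp t / fact 2 * y ^ 2"
    using Maclaurin_exp_le [of y 2] by blast
  have "exp t / 2 * y\<^sup>2 \<le> exp \<bar>y\<bar> / 2 * y\<^sup>2"
    using t(1) by (intro mult_right_mono) auto
  then show ?thesis
    using t(2) by (simp add: numeral_2_eq_2 mult_ac)
qed

lemma square_le_exp_abs: "x\<^sup>2 \<le> 2 / e\<^sup>2 * exp (e * \<bar>x\<bar>)" if "0 < e" for x e :: real
proof -
  have "1 + e * \<bar>x\<bar> + (e * \<bar>x\<bar>)\<^sup>2 / 2 \<le> exp (e * \<bar>x\<bar>)"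
    using that by (intro exp_lower_Taylor_quadratic) auto
  moreover have "0 \<le> e * \<bar>x\<bar>"
    using that by simp
  ultimately have "e\<^sup>2 * x\<^sup>2 \<le> 2 * exp (e * \<bar>x\<bar>)"
    by (simp add: power_mult_distrib)
  then show ?thesis
    using that by (simp add: field_simps)
qed

lemma exp_mult_le_quadratic_bound:
  fixes e u x :: real
  assumes "0 < e" and "\<bar>u\<bar> \<le> e"
  shows "exp (u * x) \<le> 1 + u * x + u\<^sup>2 * ((exp (2 * e * x) + exp (- (2 * e) * x)) / e\<^sup>2)"
proof -
  have "x\<^sup>2 * exp \<bar>u * x\<bar> \<le> 2 / e\<^sup>2 * exp (e * \<bar>x\<bar>) * exp (e * \<bar>x\<bar>)"
    using assms by (intro mult_mono square_le_exp_abs) (auto simp: abs_mult mult_right_mono)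
  also have "\<dots> = 2 / e\<^sup>2 * exp (2 * e * \<bar>x\<bar>)"
    by (simp add: mult_ac flip: exp_add)
  also have "\<dots> \<le> 2 / e\<^sup>2 * (exp (2 * e * x) + exp (- (2 * e) * x))"
    by (intro mult_left_mono) (auto simp: abs_real_def intro: add_increasing add_increasing2)
  finally have bound: "x\<^sup>2 * exp \<bar>u * x\<bar> \<le> 2 / e\<^sup>2 * (exp (2 * e * x) + exp (- (2 * e) * x))" .
  have "(u * x)\<^sup>2 / 2 * exp \<bar>u * x\<bar> = u\<^sup>2 * (x\<^sup>2 * exp \<bar>u * x\<bar>) / 2"
    by (simp add: power_mult_distrib)
  also have "\<dots> \<le> u\<^sup>2 * (2 / e\<^sup>2 * (exp (2 * e * x) + exp (- (2 * e) * x))) / 2"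
    using bound by (intro divide_right_mono mult_left_mono) auto
  also have "\<dots> = u\<^sup>2 * ((exp (2 * e * x) + exp (- (2 * e) * x)) / e\<^sup>2)"
    using assms(1) by (simp add: field_simps)
  finally have "(u * x)\<^sup>2 / 2 * exp \<bar>u * x\<bar> \<le> u\<^sup>2 * ((exp (2 * e * x) + exp (- (2 * e) * x)) / e\<^sup>2)" .
  then show ?thesis
    using exp_le_second_order_taylor [of "u * x"] by linarith
qed

definition locally_subgaussian :: "real measure \<Rightarrow> real \<Rightarrow> real \<Rightarrow> bool" where
  "locally_subgaussian D K d \<longleftrightarrow>
     (\<forall>u. \<bar>u\<bar> \<le> d \<longrightarrow> integrable D (\<lambda>x. exp (u * x)) \<and> (\<integral>x. exp (u * x) \<partial>D) \<le> exp (K * u\<^sup>2))"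

lemma locally_subgaussian_if_mgf_finite:
  assumes "prob_space D" and "integrable D (\<lambda>x. x)" and "(\<integral>x. x \<partial>D) = 0"
    and "\<exists>\<delta>>0. \<forall>t. \<bar>t\<bar> < \<delta> \<longrightarrow> integrable D (\<lambda>x. exp (t * x))"
  shows "\<exists>K>0. \<exists>d>0. locally_subgaussian D K d"
proof -
  interpret D: prob_space D by fact
  obtain \<delta> where "0 < \<delta>" and mgf: "\<And>t. \<bar>t\<bar> < \<delta> \<Longrightarrow> integrable D (\<lambda>x. exp (t * x))"
    using assms(4) by blast
  define e where "e = \<delta> / 4"
  define G where "G x = (exp (2 * e * x) + exp (- (2 * e) * x)) / e\<^sup>2" for x
  define K where "K = (\<integral>x. G x \<partial>D) + 1"
  have "0 < e"
    using \<open>0 < \<delta>\<close> by (simp add: e_def)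
  have int_G: "integrable D G"
    unfolding G_def using \<open>0 < \<delta>\<close>
    by (intro integrable_divide Bochner_Integration.integrable_add mgf) (auto simp: e_def)
  have "0 \<le> (\<integral>x. G x \<partial>D)"
    unfolding G_def by (intro integral_nonneg_AE AE_I2 divide_nonneg_nonneg) auto
  then have "0 < K"
    by (simp add: K_def)
  have "integrable D (\<lambda>x. exp (u * x)) \<and> (\<integral>x. exp (u * x) \<partial>D) \<le> exp (K * u\<^sup>2)" if "\<bar>u\<bar> \<le> e" for u
  proof
    show int_exp: "integrable D (\<lambda>x. exp (u * x))"
      using that \<open>0 < \<delta>\<close> by (intro mgf) (simp add: e_def)
    have int_quadratic: "integrable D (\<lambda>x. 1 + u * x + u\<^sup>2 * G x)"
      using assms(2) int_G by simp
    have "exp (u * x) \<le> 1 + u * x + u\<^sup>2 * G x" for x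
      unfolding G_def using \<open>0 < e\<close> that by (rule exp_mult_le_quadratic_bound)
    then have "(\<integral>x. exp (u * x) \<partial>D) \<le> (\<integral>x. 1 + u * x + u\<^sup>2 * G x \<partial>D)"
      using int_exp int_quadratic by (intro integral_mono)
    also have "\<dots> = 1 + u\<^sup>2 * (\<integral>x. G x \<partial>D)"
      using assms(2,3) int_G by (simp add: D.prob_space)
    also have "\<dots> \<le> 1 + K * u\<^sup>2"
      by (simp add: K_def algebra_simps)
    also have "\<dots> \<le> exp (K * u\<^sup>2)"
      by (rule exp_ge_add_one_self)
    finally show "(\<integral>x. exp (u * x) \<partial>D) \<le> exp (K * u\<^sup>2)" .
  qed
  then show ?thesis
    unfolding locally_subgaussian_def using \<open>0 < K\<close> \<open>0 < e\<close> by blast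
qed

lemma chernoff_exponent_le:
  fixes K m c :: real
  assumes "0 \<le> K" and "2 \<le> m" and "c \<le> m"
  shows "exp (K * (sqrt (ln m / m))\<^sup>2 * c - sqrt (ln m / m) * ((K + 3) * sqrt (m * ln m))) \<le> 1 / m ^ 3"
proof -
  have "0 < ln m"
    using assms(2) by simp
  have "sqrt (ln m / m) * ((K + 3) * sqrt (m * ln m)) = (K + 3) * ln m"
    using assms(2) \<open>0 < ln m\<close> by (simp add: real_sqrt_mult [symmetric] power2_eq_square)
  moreover have "K * (sqrt (ln m / m))\<^sup>2 * c \<le> K * ln m"
  proof -
    have "(sqrt (ln m / m))\<^sup>2 * c \<le> (sqrt (ln m / m))\<^sup>2 * m"
      using assms(3) by (intro mult_left_mono) auto
    also have "\<dots> = ln m"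
      using assms(2) \<open>0 < ln m\<close> by simp
    finally show ?thesis
      using assms(1) by (simp add: mult.assoc mult_left_mono)
  qed
  ultimately have "exp (K * (sqrt (ln m / m))\<^sup>2 * c - sqrt (ln m / m) * ((K + 3) * sqrt (m * ln m)))
                     \<le> exp (- (3 * ln m))"
    by (simp add: algebra_simps)
  also have "\<dots> = 1 / m ^ 3"
  proof -
    have "exp (3 * ln m) = exp (ln m) ^ 3"
      by (metis exp_of_nat_mult of_nat_numeral)
    then show ?thesis
      using assms(2) by (simp add: exp_minus inverse_eq_divide)
  qed
  finally show ?thesis .
qed

context prob_space
begin

lemma chernoff_weighted_sum:
  fixes \<xi> :: "'i \<Rightarrow> 'a \<Rightarrow> real"
  assumes indep: "indep_vars (\<lambda>_. borel) \<xi> F" and distr: "\<And>j. j \<in> F \<Longrightarrow> distr M borel (\<xi> j) = D"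
    and subg: "locally_subgaussian D K d" and "0 \<le> K" and "finite F"
    and c: "\<And>j. j \<in> F \<Longrightarrow> \<bar>c j\<bar> \<le> 1" and "0 < s" and "s \<le> d"
  shows "prob {\<omega> \<in> space M. t \<le> (\<Sum>j\<in>F. c j * \<xi> j \<omega>)} \<le> exp (K * s\<^sup>2 * real (card F) - s * t)"
proof -
  define X where "X j \<omega> = exp (s * c j * \<xi> j \<omega>)" for j \<omega>
  have meas: "\<xi> j \<in> borel_measurable M" if "j \<in> F" for j
    using indep that unfolding indep_vars_def by auto
  have indep_X: "indep_vars (\<lambda>_. borel) X F"
    unfolding X_def by (rule indep_vars_compose2 [OF indep]) simp
  have int_X: "integrable M (X j)" and E_X: "expectation (X j) \<le> exp (K * s\<^sup>2)" if "j \<in> F" for j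
  proof -
    have "\<bar>s * c j\<bar> \<le> s"
      using c [OF that] \<open>0 < s\<close> by (simp add: abs_mult mult_left_le)
    then have mgf: "integrable D (\<lambda>x. exp (s * c j * x))" "(\<integral>x. exp (s * c j * x) \<partial>D) \<le> exp (K * (s * c j)\<^sup>2)"
      using subg \<open>s \<le> d\<close> unfolding locally_subgaussian_def by auto
    have exp_meas: "(\<lambda>x. exp (s * c j * x)) \<in> borel_measurable borel"
      by measurable
    show "integrable M (X j)"
      using mgf(1) unfolding X_def distr [OF that, symmetric]
      by (subst (asm) integrable_distr_eq [OF meas [OF that] exp_meas])
    have "expectation (X j) = (\<integral>x. exp (s * c j * x) \<partial>D)"
      unfolding X_def distr [OF that, symmetric] by (rule integral_distr [OF meas [OF that] exp_meas, symmetric])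
    also have "\<dots> \<le> exp (K * (s * c j)\<^sup>2)"
      by (fact mgf(2))
    also have "\<dots> \<le> exp (K * s\<^sup>2)"
      using \<open>\<bar>s * c j\<bar> \<le> s\<close> \<open>0 < s\<close> \<open>0 \<le> K\<close> abs_le_square_iff [of "s * c j" s]
      by (simp add: mult_left_mono)
    finally show "expectation (X j) \<le> exp (K * s\<^sup>2)" .
  qed
  define Y where "Y \<omega> = (\<Prod>j\<in>F. X j \<omega>)" for \<omega>
  have Y_eq: "Y \<omega> = exp (s * (\<Sum>j\<in>F. c j * \<xi> j \<omega>))" for \<omega>
    unfolding Y_def X_def using \<open>finite F\<close> by (simp add: exp_sum sum_distrib_left mult_ac)
  have int_Y: "integrable M Y"
    unfolding Y_def using \<open>finite F\<close> indep_X int_X by (rule indep_vars_integrable)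
  have "expectation Y = (\<Prod>j\<in>F. expectation (X j))"
    unfolding Y_def using \<open>finite F\<close> indep_X int_X by (rule indep_vars_lebesgue_integral)
  also have "\<dots> \<le> (\<Prod>j\<in>F. exp (K * s\<^sup>2))"
    using E_X by (intro prod_mono conjI integral_nonneg_AE) (auto simp: X_def)
  also have "\<dots> = exp (K * s\<^sup>2 * real (card F))"
    by (simp add: mult_ac flip: exp_of_nat_mult)
  finally have E_Y: "expectation Y \<le> exp (K * s\<^sup>2 * real (card F))" .
  have "{\<omega> \<in> space M. t \<le> (\<Sum>j\<in>F. c j * \<xi> j \<omega>)} = {\<omega> \<in> space M. exp (s * t) \<le> Y \<omega>}"
    using \<open>0 < s\<close> by (auto simp: Y_eq)
  also have "prob \<dots> \<le> expectation Y / exp (s * t)"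
    by (rule integral_Markov_inequality_measure [OF int_Y sets.top]) (auto simp: Y_eq)
  also have "\<dots> \<le> exp (K * s\<^sup>2 * real (card F)) / exp (s * t)"
    using E_Y by (intro divide_right_mono) auto
  also have "\<dots> = exp (K * s\<^sup>2 * real (card F) - s * t)"
    by (simp add: exp_diff)
  finally show ?thesis .
qed

lemma chernoff_weighted_sum_abs:
  fixes \<xi> :: "'i \<Rightarrow> 'a \<Rightarrow> real"
  assumes indep: "indep_vars (\<lambda>_. borel) \<xi> F" and distr: "\<And>j. j \<in> F \<Longrightarrow> distr M borel (\<xi> j) = D"
    and subg: "locally_subgaussian D K d" and "0 \<le> K" and "finite F"
    and c: "\<And>j. j \<in> F \<Longrightarrow> \<bar>c j\<bar> \<le> 1" and "0 < s" and "s \<le> d"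
  shows "prob {\<omega> \<in> space M. t \<le> \<bar>\<Sum>j\<in>F. c j * \<xi> j \<omega>\<bar>} \<le> 2 * exp (K * s\<^sup>2 * real (card F) - s * t)"
proof -
  have [measurable]: "(\<lambda>\<omega>. \<Sum>j\<in>F. c' j * \<xi> j \<omega>) \<in> borel_measurable M" for c'
    using indep unfolding indep_vars_def by (auto intro!: borel_measurable_sum borel_measurable_times)
  have "{\<omega> \<in> space M. t \<le> \<bar>\<Sum>j\<in>F. c j * \<xi> j \<omega>\<bar>}
      = {\<omega> \<in> space M. t \<le> (\<Sum>j\<in>F. c j * \<xi> j \<omega>)} \<union> {\<omega> \<in> space M. t \<le> (\<Sum>j\<in>F. - c j * \<xi> j \<omega>)}"
    by (auto simp: abs_real_def sum_negf)
  also have "prob \<dots> \<le> prob {\<omega> \<in> space M. t \<le> (\<Sum>j\<in>F. c j * \<xi> j \<omega>)}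
                     + prob {\<omega> \<in> space M. t \<le> (\<Sum>j\<in>F. - c j * \<xi> j \<omega>)}"
    by (intro measure_Un_le) measurable
  also have "\<dots> \<le> 2 * exp (K * s\<^sup>2 * real (card F) - s * t)"
    using chernoff_weighted_sum [OF assms(1-5) _ assms(7,8), of c t]
      chernoff_weighted_sum [OF assms(1-5) _ assms(7,8), of "\<lambda>j. - c j" t] c
    by simp
  finally show ?thesis .
qed

lemma toeplitz_sigma_max_tail:
  fixes \<xi> :: "int \<Rightarrow> 'a \<Rightarrow> real"
  assumes indep: "indep_vars (\<lambda>_. borel) \<xi> UNIV" and distr: "\<And>j. distr M borel (\<xi> j) = D"
    and subg: "locally_subgaussian D K d" and "0 \<le> K" and n: "1 \<le> n"
    and large: "sqrt (ln (real (2 * n)) / real (2 * n)) \<le> d"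
  shows "prob {\<omega> \<in> space M. (2 * K + 6) * sqrt (real (2 * n) * ln (real (2 * n))) \<le> sigma_max n (toeplitz \<xi> \<omega>)}
           \<le> 6 / (real (2 * n))\<^sup>2"
proof -
  define m where "m = real (2 * n)"
  define s where "s = sqrt (ln m / m)"
  define t where "t = (K + 3) * sqrt (m * ln m)"
  define F where "F = {1 - int n..int n - 1}"
  define N where "N = 3 * n"
  define \<theta> where "\<theta> k = 2 * pi * real k / real N" for k
  define A where "A f k = {\<omega> \<in> space M. t \<le> \<bar>\<Sum>l\<in>F. f (of_int l * \<theta> k) * \<xi> l \<omega>\<bar>}" for f k
  have [measurable]: "\<xi> j \<in> borel_measurable M" for j
    using indep unfolding indep_vars_def by auto
  have "2 \<le> m" and "0 < ln m"
    using n by (auto simp: m_def)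
  have exponent: "exp (K * s\<^sup>2 * real (card F) - s * t) \<le> 1 / m ^ 3"
    unfolding s_def t_def using \<open>0 \<le> K\<close> \<open>2 \<le> m\<close>
    by (intro chernoff_exponent_le) (auto simp: F_def m_def)
  have A_bound: "prob (A f k) \<le> 2 / m ^ 3" if "\<And>x. \<bar>f x\<bar> \<le> 1" for f k
    unfolding A_def
    using exponent chernoff_weighted_sum_abs [OF indep_vars_subset [OF indep] distr subg \<open>0 \<le> K\<close>,
        where F = F and c = "\<lambda>l. f (of_int l * \<theta> k)" and s = s and t = t]
      that \<open>0 < ln m\<close> \<open>2 \<le> m\<close> large
    by (auto simp: F_def s_def m_def)
  have "{\<omega> \<in> space M. 2 * t \<le> sigma_max n (toeplitz \<xi> \<omega>)} \<subseteq> (\<Union>k<N. A cos k \<union> A sin k)"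
  proof
    fix \<omega> assume "\<omega> \<in> {\<omega> \<in> space M. 2 * t \<le> sigma_max n (toeplitz \<xi> \<omega>)}"
    then have "\<omega> \<in> space M" and "2 * t \<le> sigma_max n (\<lambda>i j. \<xi> (int j - int i) \<omega>)"
      by (simp_all add: toeplitz_def [abs_def])
    then show "\<omega> \<in> (\<Union>k<N. A cos k \<union> A sin k)"
      using sigma_max_toeplitz_ge_imp_cos_or_sin_sum_ge [OF n, of N t "\<lambda>l. \<xi> l \<omega>"]
      by (auto simp: A_def F_def \<theta>_def N_def)
  qed
  then have "prob {\<omega> \<in> space M. 2 * t \<le> sigma_max n (toeplitz \<xi> \<omega>)} \<le> prob (\<Union>k<N. A cos k \<union> A sin k)"
    by (rule finite_measure_mono) (auto simp: A_def)
  also have "\<dots> \<le> (\<Sum>k<N. prob (A cos k) + prob (A sin k))"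
    by (intro order_trans [OF measure_UNION_le] sum_mono measure_Un_le) (auto simp: A_def)
  also have "\<dots> \<le> (\<Sum>k<N. 4 / m ^ 3)"
  proof (rule sum_mono)
    fix k
    show "prob (A cos k) + prob (A sin k) \<le> 4 / m ^ 3"
      using A_bound [of cos k] A_bound [of sin k] by simp
  qed
  also have "\<dots> = 6 / m\<^sup>2"
    using \<open>2 \<le> m\<close> by (simp add: N_def m_def field_simps power3_eq_cube power2_eq_square)
  finally show ?thesis
    by (simp add: t_def m_def algebra_simps)
qed


lemma toeplitz_sigma_max_tail_uniform:
  fixes \<xi> :: "int \<Rightarrow> 'a \<Rightarrow> real"
  assumes indep: "indep_vars (\<lambda>_. borel) \<xi> UNIV" and distr: "\<And>j. distr M borel (\<xi> j) = D"
    and subg: "locally_subgaussian D K d" and "0 \<le> K" and n: "1 \<le> n"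
    and Y: "\<And>y. Y \<le> y \<Longrightarrow> sqrt (ln y / y) \<le> d"
  shows "prob {\<omega> \<in> space M. (2 * K + 6) * sqrt (real (2 * n) * ln (real (2 * n))) \<le> sigma_max n (toeplitz \<xi> \<omega>)}
           \<le> (6 + Y\<^sup>2) / (real (2 * n))\<^sup>2"
proof (cases "Y \<le> real (2 * n)")
  case True
  then have "prob {\<omega> \<in> space M. (2 * K + 6) * sqrt (real (2 * n) * ln (real (2 * n))) \<le> sigma_max n (toeplitz \<xi> \<omega>)}
               \<le> 6 / (real (2 * n))\<^sup>2"
    by (intro toeplitz_sigma_max_tail [OF indep distr subg \<open>0 \<le> K\<close> n Y])
  also have "\<dots> \<le> (6 + Y\<^sup>2) / (real (2 * n))\<^sup>2"
    by (intro divide_right_mono) auto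
  finally show ?thesis .
next
  case False
  then have "(real (2 * n))\<^sup>2 \<le> Y\<^sup>2"
    by (intro power_mono) auto
  then have "1 \<le> (6 + Y\<^sup>2) / (real (2 * n))\<^sup>2"
    using n by (simp add: field_simps)
  then show ?thesis
    using prob_le_1 order_trans by blast
qed

end

lemma eventually_sqrt_ln_div_le:
  fixes d :: real
  assumes "0 < d"
  obtains Y where "\<And>y. Y \<le> y \<Longrightarrow> sqrt (ln y / y) \<le> d"
proof -
  have "eventually (\<lambda>y. ln y / y < d\<^sup>2) at_top"
    using ln_x_over_x_tendsto_0 assms by (intro order_tendstoD) auto
  then show ?thesis
    using assms that by (fastforce simp: eventually_at_top_linorder intro: real_le_lsqrt)
qed

theorem mainTheorem1:
  fixes D :: "real measure"
  assumes "prob_space D"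
    and "sets D = sets borel"
    and "integrable D (\<lambda>x. x)"
    and "(\<integral>x. x \<partial>D) = 0"
    and "integrable D (\<lambda>x. x\<^sup>2)"
    and "(\<integral>x. x\<^sup>2 \<partial>D) > 0"
    and "\<exists>\<delta>>0. \<forall>t. \<bar>t\<bar> < \<delta> \<longrightarrow> integrable D (\<lambda>x. exp (t * x))"
  shows "\<exists>C0>0. \<exists>C1>0. \<forall>(M :: 'a measure) (\<xi> :: int \<Rightarrow> 'a \<Rightarrow> real).
           prob_space M \<and> prob_space.indep_vars M (\<lambda>_. borel) \<xi> UNIV
             \<and> (\<forall>j. distr M borel (\<xi> j) = D) \<longrightarrow>
           (\<forall>n::nat. n \<ge> 1 \<longrightarrow>
              measure M {\<omega> \<in> space M.
                 sigma_max n (toeplitz \<xi> \<omega>) \<ge> C0 * sqrt (real (2*n) * ln (real (2*n)))}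
              \<le> C1 / (real (2*n))\<^sup>2)"
proof -
  obtain K d where "0 < K" and "0 < d" and subg: "locally_subgaussian D K d"
    using locally_subgaussian_if_mgf_finite [OF assms(1,3,4,7)] by blast
  then obtain Y where Y: "\<And>y. Y \<le> y \<Longrightarrow> sqrt (ln y / y) \<le> d"
    using eventually_sqrt_ln_div_le by blast
  show ?thesis
  proof (intro exI conjI allI impI)
    fix M :: "'a measure" and \<xi> :: "int \<Rightarrow> 'a \<Rightarrow> real" and n :: nat
    assume iid: "prob_space M \<and> prob_space.indep_vars M (\<lambda>_. borel) \<xi> UNIV \<and> (\<forall>j. distr M borel (\<xi> j) = D)"
      and n: "1 \<le> n"
    interpret prob_space M
      using iid by blast
    show "prob {\<omega> \<in> space M. (2 * K + 6) * sqrt (real (2 * n) * ln (real (2 * n))) \<le> sigma_max n (toeplitz \<xi> \<omega>)}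
            \<le> (6 + Y\<^sup>2) / (real (2 * n))\<^sup>2"
      by (rule toeplitz_sigma_max_tail_uniform [OF _ _ subg _ n Y]) (use iid \<open>0 < K\<close> in auto)
  qed (use \<open>0 < K\<close> in \<open>auto simp: add_pos_nonneg\<close>)
qed

end
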